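(* Let $A \in \mathbb{R}^{m \times r}$, $b \in \mathbb{R}^m$, $P = \{ x \in \mathbb{R}^r \mid Ax \ge b\}$, $C^r = \{ x \in \mathbb{R}^r \mid Ax \ge 0\}$, and \[ \tilde C = \{ (x, \xi, Ax - \xi b) \in \mathbb{R}^{r+1+m} \mid \xi \ge 0 \text{ and } Ax - \xi b \ge 0\}. \] Then: (1) for nonzero $x \in C^r$, $x$ is conformally non-decomposable in $C^r$ if and only if $(x, 0, Ax)$ is conformally non-decomposable in $\tilde C$; (2) for $x \in P$, $x$ is convex-conformally non-decomposable in $P$ if and only if $(x, 1, Ax - b)$ is conformally non-decomposable in $\tilde C$.
   Context: For $x \in \mathbb{R}^n$, $\operatorname{sign}(x) \in \{-,0,+\}^n$ is obtained by applying the sign function componentwise; the relations $0<-$, $0<+$ induce a componentwise partial order on $\{-,0,+\}^n$. For a convex cone $K$, a nonzero $x \in K$ is conformally non-decomposable in $K$ if for all nonzero $x^1,x^2 \in K$ with $\operatorname{sign}(x^1),\operatorname{sign}(x^2) \le \operatorname{sign}(x)$, $x = x^1 + x^2$ implies $x^1 = \lambda x^2$ for some $\lambda > 0$. A vector $x \in P$ is convex-conformally non-decomposable in $P$ if for all $x^1,x^2 \in P$ with $\operatorname{sign}(x^1),\operatorname{sign}(x^2) \le \operatorname{sign}(x)$ and all $0<\lambda<1$, $x = \lambda x^1 + (1-\lambda)x^2$ implies $x^1 = x^2$. *)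

theory Defs
  imports "HOL-Analysis.Analysis"
begin

text \<open>Componentwise sign order: sign(x) \<le> sign(y), where 0 < - and 0 < +.
  Components are the coordinates w.r.t. the standard basis (for products of
  spaces, the concatenated coordinates).\<close>
definition sign_le :: "'a::euclidean_space \<Rightarrow> 'a \<Rightarrow> bool" where
  "sign_le x y \<longleftrightarrow> (\<forall>i\<in>Basis. sgn (x \<bullet> i) = 0 \<or> sgn (x \<bullet> i) = sgn (y \<bullet> i))"

definition conf_nondec :: "'a::euclidean_space set \<Rightarrow> 'a \<Rightarrow> bool" where
  "conf_nondec K x \<longleftrightarrow> x \<in> K \<and> x \<noteq> 0 \<and>
     (\<forall>x1 x2. x1 \<in> K \<and> x2 \<in> K \<and> x1 \<noteq> 0 \<and> x2 \<noteq> 0 \<and> sign_le x1 x \<and> sign_le x2 x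
        \<and> x = x1 + x2 \<longrightarrow> (\<exists>c>0. x1 = c *\<^sub>R x2))"

definition convex_conf_nondec :: "'a::euclidean_space set \<Rightarrow> 'a \<Rightarrow> bool" where
  "convex_conf_nondec P x \<longleftrightarrow> x \<in> P \<and>
     (\<forall>x1 x2 c. x1 \<in> P \<and> x2 \<in> P \<and> sign_le x1 x \<and> sign_le x2 x \<and> 0 < c \<and> c < 1
        \<and> x = c *\<^sub>R x1 + (1 - c) *\<^sub>R x2 \<longrightarrow> x1 = x2)"

end

theory Submission
  imports Defs
begin

text \<open>The cone \<open>C\<tilde>\<close> is the homogenization of \<open>P\<close>: its slice \<open>\<xi> = 0\<close> is the recession cone
  \<open>C\<^sup>r\<close> (lifted by \<open>x \<mapsto> (x, 0, Ax)\<close>), and every point with \<open>\<xi> > 0\<close> is a positive multiple of a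
  lifted point \<open>(x, 1, Ax - b)\<close> of \<open>P\<close>. Sign compatibility with \<open>(x, 0, Ax)\<close> forces \<open>\<xi> = 0\<close>, and
  the slack coordinates of a sum of two points of \<open>C\<tilde>\<close> are sums of nonnegative vectors, hence
  automatically sign-compatible; so conformal decompositions correspond exactly. For part (2), a
  conformal decomposition \<open>z\<^sub>1 + z\<^sub>2\<close> of \<open>(x, 1, Ax - b)\<close> rescales to a convex combination of two
  points of \<open>P\<close>, unless some \<open>z\<^sub>i\<close> has \<open>\<xi> = 0\<close>; then \<open>x\<close> would be the midpoint of
  \<open>x \<plusminus> y\<close> for a nonzero recession direction \<open>y\<close>, which convex-conformal non-decomposability excludes.\<close>

definition hpolyhedron :: "real^'r^'m \<Rightarrow> real^'m \<Rightarrow> (real^'r) set" where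
  "hpolyhedron A b = {x. \<forall>i. b $ i \<le> (A *v x) $ i}"

definition homogenization :: "real^'r^'m \<Rightarrow> real^'m \<Rightarrow> ((real^'r) \<times> real \<times> (real^'m)) set" where
  "homogenization A b = {(x, \<xi>, A *v x - \<xi> *\<^sub>R b) | x \<xi>. 0 \<le> \<xi> \<and> (\<forall>i. 0 \<le> (A *v x - \<xi> *\<^sub>R b) $ i)}"

lemma sign_le_Pair_iff: "sign_le (a, b) (c, d) \<longleftrightarrow> sign_le a c \<and> sign_le b d"
  unfolding sign_le_def Basis_prod_def ball_Un ball_simps by (simp add: inner_Pair)

lemma sign_le_real_iff: "sign_le (t::real) s \<longleftrightarrow> t = 0 \<or> sgn t = sgn s"
  unfolding sign_le_def by (auto simp: sgn_zero_iff)

lemma sign_le_scaleR_iff: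
  fixes y :: "'a::euclidean_space"
  assumes "0 < c"
  shows "sign_le (c *\<^sub>R y) x \<longleftrightarrow> sign_le y x"
  unfolding sign_le_def using assms by (auto simp: sgn_mult)

lemma sign_le_add_self:
  fixes y :: "'a::euclidean_space"
  assumes "sign_le y x"
  shows "sign_le (x + y) x"
  unfolding sign_le_def
proof
  fix i :: 'a assume "i \<in> Basis"
  then have "sgn (y \<bullet> i) = 0 \<or> sgn (y \<bullet> i) = sgn (x \<bullet> i)" using assms sign_le_def by blast
  then show "sgn ((x + y) \<bullet> i) = 0 \<or> sgn ((x + y) \<bullet> i) = sgn (x \<bullet> i)"
    by (auto simp: inner_add_left sgn_if split: if_splits)
qed

lemma sign_le_add_nonneg:
  fixes u v :: "real^'n"
  assumes "\<forall>i. 0 \<le> u $ i" "\<forall>i. 0 \<le> v $ i"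
  shows "sign_le u (u + v)"
  unfolding sign_le_def
proof
  fix k :: "real^'n" assume "k \<in> Basis"
  then obtain j where k: "k = axis j 1" using axis_inverse by blast
  have "u \<bullet> k = u $ j" "(u + v) \<bullet> k = u $ j + v $ j" using k by (auto simp: inner_axis)
  then show "sgn (u \<bullet> k) = 0 \<or> sgn (u \<bullet> k) = sgn ((u + v) \<bullet> k)"
    using assms[rule_format, of j] by (auto simp: sgn_if)
qed

lemma mem_homogenization_iff:
  "(y, \<xi>, s) \<in> homogenization A b \<longleftrightarrow> 0 \<le> \<xi> \<and> s = A *v y - \<xi> *\<^sub>R b \<and> (\<forall>i. 0 \<le> s $ i)"
  unfolding homogenization_def by auto

lemma mem_homogenization_zero_iff:
  "(y, 0, s) \<in> homogenization A b \<longleftrightarrow> y \<in> hpolyhedron A 0 \<and> s = A *v y"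
  unfolding mem_homogenization_iff hpolyhedron_def by auto

lemma lift_mem_homogenization_iff:
  "(x, 1, A *v x - b) \<in> homogenization A b \<longleftrightarrow> x \<in> hpolyhedron A b"
  unfolding mem_homogenization_iff hpolyhedron_def by auto

lemma scaleR_lift_mem_homogenization:
  assumes "x \<in> hpolyhedron A b" "0 \<le> c"
  shows "c *\<^sub>R (x, 1, A *v x - b) \<in> homogenization A b"
  using assms by (auto simp: mem_homogenization_iff hpolyhedron_def matrix_vector_mult_scaleR
      algebra_simps mult_left_mono[of _ _ c, simplified])

lemma homogenization_eq_scaleR_lift:
  assumes "(y, \<xi>, s) \<in> homogenization A b" "0 < \<xi>"
  obtains x where "x \<in> hpolyhedron A b" "(y, \<xi>, s) = \<xi> *\<^sub>R (x, 1, A *v x - b)"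
proof
  let ?x = "(1 / \<xi>) *\<^sub>R y"
  have Ax: "A *v ?x = (1 / \<xi>) *\<^sub>R (A *v y)" by (simp add: matrix_vector_mult_scaleR)
  have "\<forall>i. \<xi> * b $ i \<le> (A *v y) $ i"
    using assms(1) by (auto simp: mem_homogenization_iff)
  then show "?x \<in> hpolyhedron A b"
    using assms(2) by (auto simp: hpolyhedron_def Ax field_simps)
  show "(y, \<xi>, s) = \<xi> *\<^sub>R (?x, 1, A *v ?x - b)"
    using assms by (simp add: mem_homogenization_iff Ax scaleR_diff_right)
qed

lemma conf_nondec_homogenization_at_zero:
  assumes "conf_nondec (hpolyhedron A 0) x"
  shows "conf_nondec (homogenization A b) (x, 0, A *v x)"
  unfolding conf_nondec_def
proof (intro conjI allI impI)
  show "(x, 0, A *v x) \<in> homogenization A b" "(x, 0::real, A *v x) \<noteq> 0"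
    using assms by (auto simp: conf_nondec_def mem_homogenization_zero_iff zero_prod_def)
  fix z1 z2 assume z: "z1 \<in> homogenization A b \<and> z2 \<in> homogenization A b \<and> z1 \<noteq> 0 \<and> z2 \<noteq> 0
    \<and> sign_le z1 (x, 0, A *v x) \<and> sign_le z2 (x, 0, A *v x) \<and> (x, 0, A *v x) = z1 + z2"
  obtain y1 \<xi>1 s1 y2 \<xi>2 s2 where z12: "z1 = (y1, \<xi>1, s1)" "z2 = (y2, \<xi>2, s2)"
    by (cases z1, cases z2) auto
  have sg: "sign_le y1 x" "sign_le y2 x" "\<xi>1 = 0" "\<xi>2 = 0"
    using z by (auto simp: z12 sign_le_Pair_iff sign_le_real_iff sgn_zero_iff)
  then have y: "y1 \<in> hpolyhedron A 0" "y2 \<in> hpolyhedron A 0" "s1 = A *v y1" "s2 = A *v y2"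
    using z by (auto simp: z12 mem_homogenization_zero_iff)
  moreover have "y1 \<noteq> 0" "y2 \<noteq> 0" "x = y1 + y2"
    using z by (auto simp: z12 y sg zero_prod_def)
  ultimately obtain c where "0 < c" "y1 = c *\<^sub>R y2"
    using assms sg unfolding conf_nondec_def by blast
  then show "\<exists>c>0. z1 = c *\<^sub>R z2"
    by (auto simp: z12 y sg matrix_vector_mult_scaleR)
qed

lemma conf_nondec_of_homogenization_at_zero:
  assumes "conf_nondec (homogenization A b) (x, 0, A *v x)"
  shows "conf_nondec (hpolyhedron A 0) x"
  unfolding conf_nondec_def
proof (intro conjI allI impI)
  show "x \<in> hpolyhedron A 0" "x \<noteq> 0"
    using assms by (auto simp: conf_nondec_def mem_homogenization_zero_iff zero_prod_def)
  fix y1 y2 assume y: "y1 \<in> hpolyhedron A 0 \<and> y2 \<in> hpolyhedron A 0 \<and> y1 \<noteq> 0 \<and> y2 \<noteq> 0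
    \<and> sign_le y1 x \<and> sign_le y2 x \<and> x = y1 + y2"
  have Ax: "A *v x = A *v y1 + A *v y2" using y by (simp add: matrix_vector_right_distrib)
  have n: "\<forall>i. 0 \<le> (A *v y1) $ i" "\<forall>i. 0 \<le> (A *v y2) $ i" using y by (auto simp: hpolyhedron_def)
  have "sign_le (A *v y1) (A *v x)" "sign_le (A *v y2) (A *v x)"
    using sign_le_add_nonneg[OF n] sign_le_add_nonneg[OF n(2,1)] Ax by (simp_all add: add.commute)
  then have "\<exists>c>0. (y1, 0::real, A *v y1) = c *\<^sub>R (y2, 0, A *v y2)"
    using assms y Ax unfolding conf_nondec_def
    by (elim conjE allE[of _ "(y1, 0::real, A *v y1)"] allE[of _ "(y2, 0::real, A *v y2)"])
      (auto simp: mem_homogenization_zero_iff sign_le_Pair_iff sign_le_real_iff zero_prod_def)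
  then show "\<exists>c>0. y1 = c *\<^sub>R y2" by auto
qed

lemma conf_nondec_recession_cone_iff:
  "conf_nondec (hpolyhedron A 0) x \<longleftrightarrow> conf_nondec (homogenization A b) (x, 0, A *v x)"
  using conf_nondec_homogenization_at_zero conf_nondec_of_homogenization_at_zero by blast

lemma convex_conf_nondec_no_recession_direction:
  assumes "convex_conf_nondec (hpolyhedron A b) x"
    and "\<forall>i. 0 \<le> (A *v y) $ i" "sign_le y x" "sign_le (x - y) x" "x - y \<in> hpolyhedron A b"
  shows "y = 0"
proof -
  have "x \<in> hpolyhedron A b" using assms(1) by (simp add: convex_conf_nondec_def)
  then have "x + y \<in> hpolyhedron A b"
    using assms(2) by (auto simp: hpolyhedron_def matrix_vector_right_distrib intro: add_increasing2)
  moreover have "x = (1/2) *\<^sub>R (x + y) + (1 - 1/2) *\<^sub>R (x - y)"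
    by (simp add: algebra_simps flip: scaleR_add_left)
  ultimately have "x + y = x - y"
    using assms(1)[unfolded convex_conf_nondec_def, THEN conjunct2, rule_format, of "x + y" "x - y" "1/2"]
      assms(4,5) sign_le_add_self[OF assms(3)] by simp
  then have "(2::real) *\<^sub>R y = 0" unfolding scaleR_2 by (simp add: algebra_simps)
  then show "y = 0" by (simp only: scaleR_eq_0_iff) simp
qed

lemma conf_nondec_homogenization_at_lift:
  assumes H: "convex_conf_nondec (hpolyhedron A b) x"
  shows "conf_nondec (homogenization A b) (x, 1, A *v x - b)"
  unfolding conf_nondec_def
proof (intro conjI allI impI)
  show "(x, 1, A *v x - b) \<in> homogenization A b" "(x, 1::real, A *v x - b) \<noteq> 0"
    using H by (simp_all add: convex_conf_nondec_def lift_mem_homogenization_iff zero_prod_def)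
  fix z1 z2 assume z: "z1 \<in> homogenization A b \<and> z2 \<in> homogenization A b \<and> z1 \<noteq> 0 \<and> z2 \<noteq> 0
    \<and> sign_le z1 (x, 1, A *v x - b) \<and> sign_le z2 (x, 1, A *v x - b) \<and> (x, 1, A *v x - b) = z1 + z2"
  obtain y1 \<xi>1 s1 y2 \<xi>2 s2 where z12: "z1 = (y1, \<xi>1, s1)" "z2 = (y2, \<xi>2, s2)"
    by (cases z1, cases z2) auto
  have m: "0 \<le> \<xi>1" "s1 = A *v y1 - \<xi>1 *\<^sub>R b" "\<forall>i. 0 \<le> s1 $ i"
          "0 \<le> \<xi>2" "s2 = A *v y2 - \<xi>2 *\<^sub>R b" "\<forall>i. 0 \<le> s2 $ i"
    using z by (auto simp: z12 mem_homogenization_iff)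
  have sg: "sign_le y1 x" "sign_le y2 x" using z by (auto simp: z12 sign_le_Pair_iff)
  have sum: "x = y1 + y2" "\<xi>1 + \<xi>2 = 1" using z by (auto simp: z12)
  text \<open>A summand with \<open>\<xi> = 0\<close> would be a recession direction \<open>y\<close> with \<open>x \<plusminus> y\<close> conformal to \<open>x\<close> in \<open>P\<close>.\<close>
  have pos: "0 < \<xi>" if "(y, \<xi>, s) \<in> homogenization A b" "(y, \<xi>, s) \<noteq> 0" "sign_le y x"
      "sign_le (x - y) x" "\<xi> = 0 \<longrightarrow> x - y \<in> hpolyhedron A b" for y \<xi> s
    using that convex_conf_nondec_no_recession_direction[OF H, of y]
    by (fastforce simp: mem_homogenization_iff zero_prod_def)
  have "0 < \<xi>1"
    by (rule pos[of y1 _ s1]) (use z sg sum m in \<open>auto simp: z12 lift_mem_homogenization_iff[symmetric]\<close>)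
  moreover have "0 < \<xi>2"
    by (rule pos[of y2 _ s2]) (use z sg sum m in \<open>auto simp: z12 lift_mem_homogenization_iff[symmetric]\<close>)
  ultimately obtain x1 x2 where x12: "x1 \<in> hpolyhedron A b" "x2 \<in> hpolyhedron A b"
      "z1 = \<xi>1 *\<^sub>R (x1, 1, A *v x1 - b)" "z2 = \<xi>2 *\<^sub>R (x2, 1, A *v x2 - b)"
    using z homogenization_eq_scaleR_lift unfolding z12 by metis
  have "sign_le x1 x" "sign_le x2 x"
    using sg x12 \<open>0 < \<xi>1\<close> \<open>0 < \<xi>2\<close> by (auto simp: z12 sign_le_scaleR_iff)
  moreover have "x = \<xi>1 *\<^sub>R x1 + (1 - \<xi>1) *\<^sub>R x2" "\<xi>1 < 1"
    using sum x12 \<open>0 < \<xi>2\<close> by (auto simp: z12)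
  ultimately have "x1 = x2"
    using H x12(1,2) \<open>0 < \<xi>1\<close> unfolding convex_conf_nondec_def by blast
  then have "z1 = (\<xi>1 / \<xi>2) *\<^sub>R z2"
    using x12(3,4) \<open>0 < \<xi>2\<close> by (simp only: scaleR_scaleR) simp
  then show "\<exists>c>0. z1 = c *\<^sub>R z2"
    using \<open>0 < \<xi>1\<close> \<open>0 < \<xi>2\<close> divide_pos_pos by blast
qed

lemma convex_conf_nondec_of_homogenization_at_lift:
  assumes H: "conf_nondec (homogenization A b) (x, 1, A *v x - b)"
  shows "convex_conf_nondec (hpolyhedron A b) x"
  unfolding convex_conf_nondec_def
proof (intro conjI allI impI)
  show "x \<in> hpolyhedron A b"
    using H by (simp add: conf_nondec_def lift_mem_homogenization_iff)
  fix x1 x2 c assume as: "x1 \<in> hpolyhedron A b \<and> x2 \<in> hpolyhedron A b \<and> sign_le x1 x \<and> sign_le x2 x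
    \<and> 0 < c \<and> c < 1 \<and> x = c *\<^sub>R x1 + (1 - c) *\<^sub>R x2"
  define w1 where "w1 = c *\<^sub>R (x1, 1::real, A *v x1 - b)"
  define w2 where "w2 = (1 - c) *\<^sub>R (x2, 1::real, A *v x2 - b)"
  have n: "\<forall>i. 0 \<le> (c *\<^sub>R (A *v x1 - b)) $ i" "\<forall>i. 0 \<le> ((1 - c) *\<^sub>R (A *v x2 - b)) $ i"
    using as by (auto simp: hpolyhedron_def)
  have x: "x = c *\<^sub>R x1 + (1 - c) *\<^sub>R x2" using as by simp
  have Ax: "A *v x - b = c *\<^sub>R (A *v x1 - b) + (1 - c) *\<^sub>R (A *v x2 - b)"
    unfolding x by (simp add: matrix_vector_right_distrib matrix_vector_mult_scaleR algebra_simps)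
  have "w1 \<in> homogenization A b"
    unfolding w1_def using as by (intro scaleR_lift_mem_homogenization) auto
  moreover have "w2 \<in> homogenization A b"
    unfolding w2_def using as by (intro scaleR_lift_mem_homogenization) auto
  moreover have "w1 \<noteq> 0" "w2 \<noteq> 0" using as by (auto simp: w1_def w2_def zero_prod_def)
  moreover have "sign_le w1 (x, 1, A *v x - b)" "sign_le w2 (x, 1, A *v x - b)"
    using as sign_le_add_nonneg[OF n] sign_le_add_nonneg[OF n(2,1)] Ax
    by (auto simp: w1_def w2_def sign_le_Pair_iff sign_le_scaleR_iff sign_le_real_iff add.commute)
  moreover have "(x, 1, A *v x - b) = w1 + w2"
    using x Ax by (simp add: w1_def w2_def)
  ultimately obtain d where "w1 = d *\<^sub>R w2"
    using H unfolding conf_nondec_def by blast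
  then have "c = d * (1 - c)" "c *\<^sub>R x1 = (d * (1 - c)) *\<^sub>R x2"
    by (simp_all add: w1_def w2_def)
  then show "x1 = x2" using as by simp
qed

lemma convex_conf_nondec_hpolyhedron_iff:
  "convex_conf_nondec (hpolyhedron A b) x \<longleftrightarrow> conf_nondec (homogenization A b) (x, 1, A *v x - b)"
  using conf_nondec_homogenization_at_lift convex_conf_nondec_of_homogenization_at_lift by blast

theorem lemma3:
  fixes A :: "real^'r^'m" and b :: "real^'m"
  defines "P \<equiv> {x :: real^'r. \<forall>i. (A *v x) $ i \<ge> b $ i}"
      and "Cr \<equiv> {x :: real^'r. \<forall>i. (A *v x) $ i \<ge> 0}"
      and "Ct \<equiv> {(x, \<xi>, A *v x - \<xi> *\<^sub>R b) | (x :: real^'r) (\<xi> :: real).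
                   \<xi> \<ge> 0 \<and> (\<forall>i. (A *v x - \<xi> *\<^sub>R b) $ i \<ge> 0)}"
  shows "(\<forall>x\<in>Cr. x \<noteq> 0 \<longrightarrow>
            (conf_nondec Cr x \<longleftrightarrow> conf_nondec Ct (x, 0, A *v x)))
       \<and> (\<forall>x\<in>P. convex_conf_nondec P x \<longleftrightarrow> conf_nondec Ct (x, 1, A *v x - b))"
proof -
  have sets: "P = hpolyhedron A b" "Cr = hpolyhedron A 0" "Ct = homogenization A b"
    unfolding P_def Cr_def Ct_def hpolyhedron_def homogenization_def by auto
  show ?thesis
    unfolding sets using conf_nondec_recession_cone_iff[where b = b] convex_conf_nondec_hpolyhedron_iff
    by blast
qed

end
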